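(* Let $N_1=(S_1,A,L_1,AP,V_1,\{s_0^1\})$ and $N_2=(S_2,A,L_2,AP,V_2,\{s_0^2\})$ be deterministic APAs in SVNF such that $N_1\not\preceq N_2$, and let $1\le K_1\le K_2$ be integers. Then $d(N_1\setminus^{K_2}N_2,\ N_1\setminus^{K_1}N_2)\le\lambda^{K_1}$, where $d$ is the syntactic distance with discount factor $\lambda$ and $N_1\setminus^KN_2$ is the level-$K$ under-approximating difference, both defined in the context.
   Context: Basic notions. For a finite set $S$, $\mathrm{Dist}(S)$ is the set of probability distributions on $S$; $C(S)$ is a set of constraints, each $\phi\in C(S)$ determining $Sat(\phi)\subseteq\mathrm{Dist}(S)$. An APA is a tuple $N=(S,A,L,AP,V,S_0)$ with finite state set $S$, initial states $S_0\subseteq S$, finite action set $A$, finite set $AP$ of atomic propositions, $L:S\times A\times C(S)\to\{\top,?,\bot\}$ ($\top$: must, $?$: may, $\bot$: no transition) and $V:S\to 2^{2^{AP}}$. An APA is in SVNF if $|V(s)|\le1$ for all $s$; it is deterministic if it has exactly one initial state, for all $s,a$ at most one $\phi$ has $L(s,a,\phi)\ne\bot$, and for all $s,a,\phi$ with $L(s,a,\phi)\ne\bot$ and distinct states $s',s''$ with $V(s')\cap V(s'')\ne\emptyset$ there are no $\mu,\mu'\in Sat(\phi)$ with $\mu(s')>0$ and $\mu'(s'')>0$. For $\mu\in\mathrm{Dist}(S)$, $\mu'\in\mathrm{Dist}(S')$, $\mathcal R\subseteq S\times S'$ and $\delta:S\to(S'\to[0,1])$, $\mu\Subset^\delta_{\mathcal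 R}\mu'$ means $\delta(s)$ is a distribution whenever $\mu(s)>0$, $\sum_s\mu(s)\delta(s)(s')=\mu'(s')$ for all $s'$, and $\delta(s)(s')>0\Rightarrow(s,s')\in\mathcal R$; $\mu\Subset_{\mathcal R}\mu'$ if such $\delta$ exists; $\Subset^\delta$ means $\Subset^\delta_{S\times S'}$. A refinement relation between APAs $N_1,N_2$ is $\mathcal R\subseteq S_1\times S_2$ such that for all $(s_1,s_2)\in\mathcal R$: $V_1(s_1)\subseteq V_2(s_2)$; whenever $L_2(s_2,a,\phi_2)=\top$ there is $\phi_1$ with $L_1(s_1,a,\phi_1)=\top$ and every $\mu_1\in Sat(\phi_1)$ has some $\mu_2\in Sat(\phi_2)$ with $\mu_1\Subset_{\mathcal R}\mu_2$; whenever $L_1(s_1,a,\phi_1)\ne\bot$ there is $\phi_2$ with $L_2(s_2,a,\phi_2)\ne\bot$ and every $\mu_1\in Sat(\phi_1)$ has some $\mu_2\in Sat(\phi_2)$ with $\mu_1\Subset_{\mathcal R}\mu_2$. $N_1\preceq N_2$ if some refinement relation relates each initial state of $N_1$ to some initial state of $N_2$. For $N$ in SVNF, $\mathsf{succ}_{s,a}(v)=\{s'\mid V(s')=\{v\},\ \exists\phi\,\exists\mu\in Sat(\phi):L(s,a,\phi)\ne\bot,\mu(s')>0\}$; for deterministic $N$ this has at most one element, identified with that element (or $\emptyset$); for a state $t$ of another automaton with valuation set $\{v\}$, $\mathsf{succ}_{s,a}(t):=\mathsf{succ}_{s,a}(v)$. Distances: fix $0<\lambda<1$. For APAs $M_1,M_2$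 in SVNF (states $S_1,S_2$, functions $L_1,L_2,V_1,V_2$), $s_1,s_2$ are not compatible if $V_1(s_1)\ne V_2(s_2)$, or some $a,\phi_1$ has $L_1(s_1,a,\phi_1)\ne\bot$ while $L_2(s_2,a,\cdot)\equiv\bot$, or some $a,\phi_2$ has $L_2(s_2,a,\phi_2)=\top$ while $L_1(s_1,a,\phi_1)\ne\top$ for all $\phi_1$. $D(\phi_1,\phi_2,d)=\sup_{\mu_1\in Sat(\phi_1)}\inf_{\mu_2\in Sat(\phi_2)}\inf_{\delta:\mu_1\Subset^\delta\mu_2}\sum_{(s_1,s_2)}\mu_1(s_1)\delta(s_1)(s_2)d(s_1,s_2)$. The state distance $d:S_1\times S_2\to[0,1]$ is the least fixed point of $d(s_1,s_2)=1$ if not compatible, else $d(s_1,s_2)=\max\{\max_{a,\phi_1:L_1(s_1,a,\phi_1)\ne\bot}\min_{\phi_2:L_2(s_2,a,\phi_2)\ne\bot}\lambda D(\phi_1,\phi_2,d),\ \max_{a,\phi_2:L_2(s_2,a,\phi_2)=\top}\min_{\phi_1:L_1(s_1,a,\phi_1)=\top}\lambda D(\phi_1,\phi_2,d)\}$. The syntactic distance is $d(M_1,M_2)=\max_{s\in S_0^1}\min_{s'\in S_0^2}d(s,s')$. Cases for $N_1,N_2$. Let $\mathcal R$ be the maximal refinement relation between $N_1$ and $N_2$. A pair $(s_1,s_2)\in S_1\times S_2$ is in case 1 if $(s_1,s_2)\in\mathcal R$, in case 2 if $V_1(s_1)\ne V_2(s_2)$, in case 3 if $(s_1,s_2)\notin\mathcal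 R$ and $V_1(s_1)=V_2(s_2)$. For $(s_1,s_2)$ in case 3 and $e\in A$: $e\in B_a(s_1,s_2)$ iff some $\phi_1$ has $L_1(s_1,e,\phi_1)=\top$ and $L_2(s_2,e,\cdot)\equiv\bot$; $e\in B_b$ iff some $\phi_1$ has $L_1(s_1,e,\phi_1)=?$ and $L_2(s_2,e,\cdot)\equiv\bot$; $e\in B_c$ iff some $\phi_1$ has $L_1(s_1,e,\phi_1)\in\{?,\top\}$, some $\phi_2$ has $L_2(s_2,e,\phi_2)=?$, and some $\mu\in Sat(\phi_1)$ has $\mu\not\Subset_{\mathcal R}\mu'$ for all $\mu'\in Sat(\phi_2)$; $e\in B_d$ iff some $\phi_2$ has $L_2(s_2,e,\phi_2)=\top$ and $L_1(s_1,e,\cdot)\equiv\bot$; $e\in B_e$ iff some $\phi_2$ has $L_2(s_2,e,\phi_2)=\top$ and some $\phi_1$ has $L_1(s_1,e,\phi_1)=?$; $e\in B_f$ iff some $\phi_2$ has $L_2(s_2,e,\phi_2)=\top$, some $\phi_1$ has $L_1(s_1,e,\phi_1)=\top$, and some $\mu\in Sat(\phi_1)$ has $\mu\not\Subset_{\mathcal R}\mu'$ for all $\mu'\in Sat(\phi_2)$. These sets are empty for pairs not in case 3 and for pairs $(s_1,\bot)$. $B(s_1,s_2)$ is the union of the six (pairwise disjoint) sets. For $e\in B(s_1,s_2)$, $\phi_1$ (resp. $\phi_2$) denotes the unique constraint with $L_1(s_1,e,\phi_1)\ne\bot$ (resp. $L_2(s_2,e,\phi_2)\ne\bot$), when it exists.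 Under-approximation $N_1\setminus^KN_2$ ($K\ge1$). If $V_1(s_0^1)\ne V_2(s_0^2)$ then $N_1\setminus^KN_2:=N_1$. Otherwise $N_1\setminus^KN_2=(S,A,L,AP,V,S_0^K)$ with $S=S_1\times(S_2\cup\{\bot\})\times(A\cup\{\epsilon\})\times\{1,\dots,K\}$, $V(s_1,s_2,e,k)=V_1(s_1)$, $S_0^K=\{(s_0^1,s_0^2,f,K)\mid f\in B(s_0^1,s_0^2)\}$. For $\phi\in C(S_1)$: $\mu\in Sat(\phi^\bot)$ iff $\mu$ is supported on $S_1\times\{\bot\}\times\{\epsilon\}\times\{1\}$ and $s_1\mapsto\mu(s_1,\bot,\epsilon,1)$ is in $Sat(\phi)$. For a state $(s_1,s_2,e,k)$ with $s_2\ne\bot$, $e\ne\epsilon$ and $\phi_1,\phi_2$ with $L_1(s_1,e,\phi_1)\ne\bot\ne L_2(s_2,e,\phi_2)$: $\mu\in Sat(\phi^{B,k}_{12})$ iff (1) $\mu(s_1',s_2',c,k')>0$ implies $c\in B(s_1',s_2')\cup\{\epsilon\}$ and either ($\mathsf{succ}_{s_2,e}(s_1')=\emptyset$, $s_2'=\bot$, $k'=1$) or $s_2'=\mathsf{succ}_{s_2,e}(s_1')$; (2) $s_1'\mapsto\sum_{c,s_2',k'}\mu(s_1',s_2',c,k')$ is in $Sat(\phi_1)$; (3) (a) $\mu(s_1',\bot,c,1)>0$ for some $s_1',c$, or (b) $s_2'\mapsto\sum_{c,\,s_1'\in S_1,\,k'}\mu(s_1',s_2',c,k')$ ($s_2'\in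 S_2$) is not in $Sat(\phi_2)$, or (c) $k\ne1$ and $\mu(s_1',s_2',c,k')>0$ for some $s_1'$, $s_2'\in S_2$, $c\ne\epsilon$, $k'<k$. Transitions of $t=(s_1,s_2,e,k)$: if $s_2=\bot$ or $e=\epsilon$ or $(s_1,s_2)$ is in case 1 or 2, set $L(t,a,\phi^\bot)=L_1(s_1,a,\phi)$ whenever $L_1(s_1,a,\phi)\ne\bot$. Otherwise $(s_1,s_2)$ is in case 3 and (for reachable states) $e\in B(s_1,s_2)$: if $e\in B_a\cup B_b$, set $L(t,a,\phi^\bot)=L_1(s_1,a,\phi)$ for $a\ne e$ with $L_1(s_1,a,\phi)\ne\bot$, and $L(t,e,\phi_1^\bot)=\top$; if $e\in B_d$, set $L(t,a,\phi^\bot)=L_1(s_1,a,\phi)$ for all $a,\phi$ with $L_1(s_1,a,\phi)\ne\bot$; if $e\in B_e$, copy for $a\ne e$ and set $L(t,e,\phi^{B,k}_{12})=?$; if $e\in B_c\cup B_f$, copy for all $a$ (including $e$) and set $L(t,e,\phi^{B,k}_{12})=\top$. All other values of $L$ are $\bot$. *)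

theory Defs
  imports "HOL-Analysis.Analysis" "HOL-Library.Extended_Nonnegative_Real"
begin

text \<open>Modalities: Must = top (must), May = ? (may), No = bot (no transition).\<close>
datatype mtv = Must | May | No

record ('s, 'a, 'p, 'c) apa =
  St   :: "'s set"
  Act  :: "'a set"
  Lab  :: "'s \<Rightarrow> 'a \<Rightarrow> 'c \<Rightarrow> mtv"
  APs  :: "'p set"
  Val  :: "'s \<Rightarrow> 'p set set"
  Init :: "'s set"
  Sat  :: "'c \<Rightarrow> ('s \<Rightarrow> real) set"

definition distr :: "'s set \<Rightarrow> ('s \<Rightarrow> real) \<Rightarrow> bool" where
  "distr S \<mu> \<longleftrightarrow> (\<forall>s\<in>S. 0 \<le> \<mu> s) \<and> (\<forall>s. s \<notin> S \<longrightarrow> \<mu> s = 0) \<and> sum \<mu> S = 1"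

definition wf_apa :: "('s, 'a, 'p, 'c) apa \<Rightarrow> bool" where
  "wf_apa N \<longleftrightarrow> finite (St N) \<and> finite (Act N) \<and> finite (APs N) \<and> Init N \<subseteq> St N
     \<and> (\<forall>s\<in>St N. Val N s \<subseteq> Pow (APs N))
     \<and> (\<forall>s a \<phi>. Lab N s a \<phi> \<noteq> No \<longrightarrow> s \<in> St N \<and> a \<in> Act N \<and> (\<forall>\<mu>\<in>Sat N \<phi>. distr (St N) \<mu>))"

definition svnf :: "('s, 'a, 'p, 'c) apa \<Rightarrow> bool" where
  "svnf N \<longleftrightarrow> (\<forall>s\<in>St N. card (Val N s) \<le> 1)"

definition deterministic :: "('s, 'a, 'p, 'c) apa \<Rightarrow> bool" where
  "deterministic N \<longleftrightarrow> (\<exists>s0. Init N = {s0})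
     \<and> (\<forall>s\<in>St N. \<forall>a\<in>Act N. \<forall>\<phi> \<phi>'. Lab N s a \<phi> \<noteq> No \<and> Lab N s a \<phi>' \<noteq> No \<longrightarrow> \<phi> = \<phi>')
     \<and> (\<forall>s\<in>St N. \<forall>a\<in>Act N. \<forall>\<phi>. Lab N s a \<phi> \<noteq> No \<longrightarrow>
          (\<forall>s'\<in>St N. \<forall>s''\<in>St N. s' \<noteq> s'' \<and> Val N s' \<inter> Val N s'' \<noteq> {} \<longrightarrow>
             \<not> (\<exists>\<mu>\<in>Sat N \<phi>. \<exists>\<mu>'\<in>Sat N \<phi>. \<mu> s' > 0 \<and> \<mu>' s'' > 0)))"

definition corr_by ::
  "'s set \<Rightarrow> 't set \<Rightarrow> ('s \<times> 't) set \<Rightarrow> ('s \<Rightarrow> real) \<Rightarrow> ('t \<Rightarrow> real) \<Rightarrow> ('s \<Rightarrow> 't \<Rightarrow> real) \<Rightarrow> bool"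
  where
  "corr_by S S' R \<mu> \<mu>' \<delta> \<longleftrightarrow>
     (\<forall>s\<in>S. \<forall>s'\<in>S'. 0 \<le> \<delta> s s' \<and> \<delta> s s' \<le> 1)
     \<and> (\<forall>s\<in>S. \<mu> s > 0 \<longrightarrow> distr S' (\<delta> s))
     \<and> (\<forall>s'\<in>S'. (\<Sum>s\<in>S. \<mu> s * \<delta> s s') = \<mu>' s')
     \<and> (\<forall>s\<in>S. \<forall>s'\<in>S'. \<delta> s s' > 0 \<longrightarrow> (s, s') \<in> R)"

definition corr :: "'s set \<Rightarrow> 't set \<Rightarrow> ('s \<times> 't) set \<Rightarrow> ('s \<Rightarrow> real) \<Rightarrow> ('t \<Rightarrow> real) \<Rightarrow> bool" where
  "corr S S' R \<mu> \<mu>' \<longleftrightarrow> (\<exists>\<delta>. corr_by S S' R \<mu> \<mu>' \<delta>)"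

definition refinement_rel ::
  "('s1, 'a, 'p, 'c1) apa \<Rightarrow> ('s2, 'a, 'p, 'c2) apa \<Rightarrow> ('s1 \<times> 's2) set \<Rightarrow> bool" where
  "refinement_rel N1 N2 R \<longleftrightarrow> R \<subseteq> St N1 \<times> St N2 \<and>
     (\<forall>(s1, s2)\<in>R.
        Val N1 s1 \<subseteq> Val N2 s2
      \<and> (\<forall>a \<phi>2. Lab N2 s2 a \<phi>2 = Must \<longrightarrow>
           (\<exists>\<phi>1. Lab N1 s1 a \<phi>1 = Must \<and>
              (\<forall>\<mu>1\<in>Sat N1 \<phi>1. \<exists>\<mu>2\<in>Sat N2 \<phi>2. corr (St N1) (St N2) R \<mu>1 \<mu>2)))
      \<and> (\<forall>a \<phi>1. Lab N1 s1 a \<phi>1 \<noteq> No \<longrightarrow>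
           (\<exists>\<phi>2. Lab N2 s2 a \<phi>2 \<noteq> No \<and>
              (\<forall>\<mu>1\<in>Sat N1 \<phi>1. \<exists>\<mu>2\<in>Sat N2 \<phi>2. corr (St N1) (St N2) R \<mu>1 \<mu>2))))"

definition refines :: "('s1, 'a, 'p, 'c1) apa \<Rightarrow> ('s2, 'a, 'p, 'c2) apa \<Rightarrow> bool" where
  "refines N1 N2 \<longleftrightarrow> (\<exists>R. refinement_rel N1 N2 R \<and> (\<forall>s\<in>Init N1. \<exists>s'\<in>Init N2. (s, s') \<in> R))"

definition maxref :: "('s1, 'a, 'p, 'c1) apa \<Rightarrow> ('s2, 'a, 'p, 'c2) apa \<Rightarrow> ('s1 \<times> 's2) set" where
  "maxref N1 N2 = \<Union>{R. refinement_rel N1 N2 R}"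

definition compatible :: "('s1, 'a, 'p, 'c1) apa \<Rightarrow> ('s2, 'a, 'p, 'c2) apa \<Rightarrow> 's1 \<Rightarrow> 's2 \<Rightarrow> bool" where
  "compatible M1 M2 s1 s2 \<longleftrightarrow> Val M1 s1 = Val M2 s2
     \<and> (\<forall>a \<phi>1. Lab M1 s1 a \<phi>1 \<noteq> No \<longrightarrow> (\<exists>\<phi>2. Lab M2 s2 a \<phi>2 \<noteq> No))
     \<and> (\<forall>a \<phi>2. Lab M2 s2 a \<phi>2 = Must \<longrightarrow> (\<exists>\<phi>1. Lab M1 s1 a \<phi>1 = Must))"

text \<open>D(phi1,phi2,d).  Values live in [0,1]; the infimum is taken in [0,1]
  (hence the extra element 1, which only matters when the set is empty).\<close>
definition Dcon :: "('s1, 'a, 'p, 'c1) apa \<Rightarrow> ('s2, 'a, 'p, 'c2) apa \<Rightarrow> 'c1 \<Rightarrow> 'c2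
    \<Rightarrow> ('s1 \<Rightarrow> 's2 \<Rightarrow> ennreal) \<Rightarrow> ennreal" where
  "Dcon M1 M2 \<phi>1 \<phi>2 d = (SUP \<mu>1\<in>Sat M1 \<phi>1.
      Inf (insert 1 {(\<Sum>(x, y)\<in>St M1 \<times> St M2. ennreal (\<mu>1 x * \<delta> x y) * d x y) | \<mu>2 \<delta>.
               \<mu>2 \<in> Sat M2 \<phi>2 \<and> corr_by (St M1) (St M2) (St M1 \<times> St M2) \<mu>1 \<mu>2 \<delta>}))"

definition dist_op :: "real \<Rightarrow> ('s1, 'a, 'p, 'c1) apa \<Rightarrow> ('s2, 'a, 'p, 'c2) apa
    \<Rightarrow> ('s1 \<Rightarrow> 's2 \<Rightarrow> ennreal) \<Rightarrow> ('s1 \<Rightarrow> 's2 \<Rightarrow> ennreal)" where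
  "dist_op lam M1 M2 d = (\<lambda>s1 s2.
     if \<not> compatible M1 M2 s1 s2 then 1
     else max
       (SUP (a, \<phi>1)\<in>{(a, \<phi>1). Lab M1 s1 a \<phi>1 \<noteq> No}.
          INF \<phi>2\<in>{\<phi>2. Lab M2 s2 a \<phi>2 \<noteq> No}. ennreal lam * Dcon M1 M2 \<phi>1 \<phi>2 d)
       (SUP (a, \<phi>2)\<in>{(a, \<phi>2). Lab M2 s2 a \<phi>2 = Must}.
          INF \<phi>1\<in>{\<phi>1. Lab M1 s1 a \<phi>1 = Must}. ennreal lam * Dcon M1 M2 \<phi>1 \<phi>2 d))"

definition state_dist :: "real \<Rightarrow> ('s1, 'a, 'p, 'c1) apa \<Rightarrow> ('s2, 'a, 'p, 'c2) apa \<Rightarrow> 's1 \<Rightarrow> 's2 \<Rightarrow> ennreal" where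
  "state_dist lam M1 M2 = lfp (dist_op lam M1 M2)"

definition apa_dist :: "real \<Rightarrow> ('s1, 'a, 'p, 'c1) apa \<Rightarrow> ('s2, 'a, 'p, 'c2) apa \<Rightarrow> ennreal" where
  "apa_dist lam M1 M2 = (SUP s\<in>Init M1. INF s'\<in>Init M2. state_dist lam M1 M2 s s')"

definition case3 :: "('s1, 'a, 'p, 'c1) apa \<Rightarrow> ('s2, 'a, 'p, 'c2) apa \<Rightarrow> 's1 \<Rightarrow> 's2 \<Rightarrow> bool" where
  "case3 N1 N2 s1 s2 \<longleftrightarrow> (s1, s2) \<notin> maxref N1 N2 \<and> Val N1 s1 = Val N2 s2"

abbreviation not_corr_all ::
  "('s1, 'a, 'p, 'c1) apa \<Rightarrow> ('s2, 'a, 'p, 'c2) apa \<Rightarrow> 'c1 \<Rightarrow> 'c2 \<Rightarrow> bool" where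
  "not_corr_all N1 N2 \<phi>1 \<phi>2 \<equiv>
     (\<exists>\<mu>\<in>Sat N1 \<phi>1. \<forall>\<mu>'\<in>Sat N2 \<phi>2. \<not> corr (St N1) (St N2) (maxref N1 N2) \<mu> \<mu>')"

definition Ba :: "('s1, 'a, 'p, 'c1) apa \<Rightarrow> ('s2, 'a, 'p, 'c2) apa \<Rightarrow> 's1 \<Rightarrow> 's2 \<Rightarrow> 'a set" where
  "Ba N1 N2 s1 s2 = {e. case3 N1 N2 s1 s2 \<and>
     (\<exists>\<phi>1. Lab N1 s1 e \<phi>1 = Must) \<and> (\<forall>\<phi>2. Lab N2 s2 e \<phi>2 = No)}"

definition Bb :: "('s1, 'a, 'p, 'c1) apa \<Rightarrow> ('s2, 'a, 'p, 'c2) apa \<Rightarrow> 's1 \<Rightarrow> 's2 \<Rightarrow> 'a set" where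
  "Bb N1 N2 s1 s2 = {e. case3 N1 N2 s1 s2 \<and>
     (\<exists>\<phi>1. Lab N1 s1 e \<phi>1 = May) \<and> (\<forall>\<phi>2. Lab N2 s2 e \<phi>2 = No)}"

definition Bc :: "('s1, 'a, 'p, 'c1) apa \<Rightarrow> ('s2, 'a, 'p, 'c2) apa \<Rightarrow> 's1 \<Rightarrow> 's2 \<Rightarrow> 'a set" where
  "Bc N1 N2 s1 s2 = {e. case3 N1 N2 s1 s2 \<and>
     (\<exists>\<phi>1 \<phi>2. Lab N1 s1 e \<phi>1 \<noteq> No \<and> Lab N2 s2 e \<phi>2 = May \<and> not_corr_all N1 N2 \<phi>1 \<phi>2)}"

definition Bd :: "('s1, 'a, 'p, 'c1) apa \<Rightarrow> ('s2, 'a, 'p, 'c2) apa \<Rightarrow> 's1 \<Rightarrow> 's2 \<Rightarrow> 'a set" where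
  "Bd N1 N2 s1 s2 = {e. case3 N1 N2 s1 s2 \<and>
     (\<exists>\<phi>2. Lab N2 s2 e \<phi>2 = Must) \<and> (\<forall>\<phi>1. Lab N1 s1 e \<phi>1 = No)}"

definition Be :: "('s1, 'a, 'p, 'c1) apa \<Rightarrow> ('s2, 'a, 'p, 'c2) apa \<Rightarrow> 's1 \<Rightarrow> 's2 \<Rightarrow> 'a set" where
  "Be N1 N2 s1 s2 = {e. case3 N1 N2 s1 s2 \<and>
     (\<exists>\<phi>2. Lab N2 s2 e \<phi>2 = Must) \<and> (\<exists>\<phi>1. Lab N1 s1 e \<phi>1 = May)}"

definition Bf :: "('s1, 'a, 'p, 'c1) apa \<Rightarrow> ('s2, 'a, 'p, 'c2) apa \<Rightarrow> 's1 \<Rightarrow> 's2 \<Rightarrow> 'a set" where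
  "Bf N1 N2 s1 s2 = {e. case3 N1 N2 s1 s2 \<and>
     (\<exists>\<phi>1 \<phi>2. Lab N1 s1 e \<phi>1 = Must \<and> Lab N2 s2 e \<phi>2 = Must \<and> not_corr_all N1 N2 \<phi>1 \<phi>2)}"

text \<open>B(s1,s2); empty for pairs (s1, bot), represented by None.\<close>
definition Bset :: "('s1, 'a, 'p, 'c1) apa \<Rightarrow> ('s2, 'a, 'p, 'c2) apa \<Rightarrow> 's1 \<Rightarrow> 's2 option \<Rightarrow> 'a set"
  where
  "Bset N1 N2 s1 s2o = (case s2o of None \<Rightarrow> {} | Some s2 \<Rightarrow>
     Ba N1 N2 s1 s2 \<union> Bb N1 N2 s1 s2 \<union> Bc N1 N2 s1 s2 \<union> Bd N1 N2 s1 s2 \<union> Be N1 N2 s1 s2 \<union> Bf N1 N2 s1 s2)"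

definition succ2 :: "('s1, 'a, 'p, 'c1) apa \<Rightarrow> ('s2, 'a, 'p, 'c2) apa \<Rightarrow> 's2 \<Rightarrow> 'a \<Rightarrow> 's1 \<Rightarrow> 's2 set" where
  "succ2 N1 N2 s2 e s1' = {s'. s' \<in> St N2 \<and> Val N2 s' = Val N1 s1' \<and>
      (\<exists>\<phi> \<mu>. Lab N2 s2 e \<phi> \<noteq> No \<and> \<mu> \<in> Sat N2 \<phi> \<and> \<mu> s' > 0)}"

text \<open>States of the difference: (s1, s2 or bot=None, e or epsilon=None, k).
  Constraints: DBot phi is phi^bot, DB s2 e phi1 phi2 k is phi^{B,k}_{12} built
  at a state with second component s2 and third component e.\<close>
type_synonym ('s1, 's2, 'a) dstate = "'s1 \<times> 's2 option \<times> 'a option \<times> nat"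

datatype ('c1, 'c2, 's2, 'a) dcon = DBot 'c1 | DB 's2 'a 'c1 'c2 nat

definition diff_states :: "('s1, 'a, 'p, 'c1) apa \<Rightarrow> ('s2, 'a, 'p, 'c2) apa \<Rightarrow> nat \<Rightarrow> ('s1, 's2, 'a) dstate set" where
  "diff_states N1 N2 K = St N1 \<times> insert None (Some ` St N2) \<times> insert None (Some ` Act N1) \<times> {1..K}"

definition diff_sat :: "('s1, 'a, 'p, 'c1) apa \<Rightarrow> ('s2, 'a, 'p, 'c2) apa \<Rightarrow> ('s1, 's2, 'a) dstate set
    \<Rightarrow> ('c1, 'c2, 's2, 'a) dcon \<Rightarrow> (('s1, 's2, 'a) dstate \<Rightarrow> real) set" where
  "diff_sat N1 N2 S c = (case c of
     DBot \<phi> \<Rightarrow> {\<mu>. distr S \<mu> \<and> (\<forall>t. \<mu> t > 0 \<longrightarrow> (\<exists>s1. t = (s1, None, None, 1)))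
                  \<and> (\<lambda>s1. \<mu> (s1, None, None, 1)) \<in> Sat N1 \<phi>}
   | DB s2 e \<phi>1 \<phi>2 k \<Rightarrow> {\<mu>. distr S \<mu>
       \<and> (\<forall>s1' s2' c k'. \<mu> (s1', s2', c, k') > 0 \<longrightarrow>
            c \<in> insert None (Some ` Bset N1 N2 s1' s2') \<and>
            ((succ2 N1 N2 s2 e s1' = {} \<and> s2' = None \<and> k' = 1) \<or> s2' \<in> Some ` succ2 N1 N2 s2 e s1'))
       \<and> (\<lambda>s1'. \<Sum>t\<in>{t\<in>S. fst t = s1'}. \<mu> t) \<in> Sat N1 \<phi>1
       \<and> ((\<exists>s1' c. \<mu> (s1', None, c, 1) > 0)
          \<or> (\<lambda>s2'. \<Sum>t\<in>{t\<in>S. fst (snd t) = Some s2'}. \<mu> t) \<notin> Sat N2 \<phi>2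
          \<or> (k \<noteq> 1 \<and> (\<exists>s1' s2' c k'. \<mu> (s1', Some s2', Some c, k') > 0 \<and> k' < k)))})"

definition diff_lab :: "('s1, 'a, 'p, 'c1) apa \<Rightarrow> ('s2, 'a, 'p, 'c2) apa \<Rightarrow> ('s1, 's2, 'a) dstate set
    \<Rightarrow> ('s1, 's2, 'a) dstate \<Rightarrow> 'a \<Rightarrow> ('c1, 'c2, 's2, 'a) dcon \<Rightarrow> mtv" where
  "diff_lab N1 N2 S t a c = (case t of (s1, s2o, eo, k) \<Rightarrow>
     let copy = (case c of DBot \<phi> \<Rightarrow> Lab N1 s1 a \<phi> | DB _ _ _ _ _ \<Rightarrow> No) in
     if t \<notin> S then No else
     (case (s2o, eo) of
        (Some s2, Some e) \<Rightarrow>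
          if (s1, s2) \<in> maxref N1 N2 \<or> Val N1 s1 \<noteq> Val N2 s2 then copy
          else
            let newc = (case c of DBot _ \<Rightarrow> False
                          | DB s2' e' \<phi>1 \<phi>2 k' \<Rightarrow> a = e \<and> s2' = s2 \<and> e' = e \<and> k' = k
                               \<and> Lab N1 s1 e \<phi>1 \<noteq> No \<and> Lab N2 s2 e \<phi>2 \<noteq> No) in
            if e \<in> Ba N1 N2 s1 s2 \<union> Bb N1 N2 s1 s2 then
              (if a \<noteq> e then copy
               else (case c of DBot \<phi> \<Rightarrow> if Lab N1 s1 e \<phi> \<noteq> No then Must else No | DB _ _ _ _ _ \<Rightarrow> No))
            else if e \<in> Bd N1 N2 s1 s2 then copy
            else if e \<in> Be N1 N2 s1 s2 then
              (if a \<noteq> e then copy else if newc then May else No)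
            else if e \<in> Bc N1 N2 s1 s2 \<union> Bf N1 N2 s1 s2 then
              (if newc then Must else copy)
            else No
      | _ \<Rightarrow> copy))"

definition diff_gen :: "('s1, 'a, 'p, 'c1) apa \<Rightarrow> ('s2, 'a, 'p, 'c2) apa \<Rightarrow> ('s1, 's2, 'a) dstate set
    \<Rightarrow> ('s1, 's2, 'a) dstate set \<Rightarrow> (('s1, 's2, 'a) dstate, 'a, 'p, ('c1, 'c2, 's2, 'a) dcon) apa" where
  "diff_gen N1 N2 S I = \<lparr> St = S, Act = Act N1, Lab = diff_lab N1 N2 S, APs = APs N1,
      Val = (\<lambda>t. Val N1 (fst t)), Init = I, Sat = diff_sat N1 N2 S \<rparr>"

text \<open>If the initial valuations
  differ, the result is N1, represented by its isomorphic copy on the states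
  (s1, bot, epsilon, 1) with constraints phi^bot.\<close>
definition apa_diff :: "('s1, 'a, 'p, 'c1) apa \<Rightarrow> ('s2, 'a, 'p, 'c2) apa \<Rightarrow> nat
    \<Rightarrow> (('s1, 's2, 'a) dstate, 'a, 'p, ('c1, 'c2, 's2, 'a) dcon) apa" where
  "apa_diff N1 N2 K = (let s01 = the_elem (Init N1); s02 = the_elem (Init N2) in
     if Val N1 s01 \<noteq> Val N2 s02
     then diff_gen N1 N2 (St N1 \<times> {None} \<times> {None} \<times> {1}) {(s01, None, None, 1)}
     else diff_gen N1 N2 (diff_states N1 N2 K)
            {(s01, Some s02, Some f, K) | f. f \<in> Bset N1 N2 s01 (Some s02)})"

end

theory Submission
  imports Defs
begin

text \<open>The state distance is the least fixed point of \<open>dist_op\<close>, so it is bounded by any \<open>d\<close>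
  with \<open>dist_op d \<le> d\<close>.  Such a \<open>d\<close> compares a state \<open>(s, s\<^sub>2, e, k)\<close> of the level-\<open>K\<^sub>2\<close>
  difference only with the states \<open>(s, s\<^sub>2, e, k')\<close>, \<open>k' \<le> k\<close>, of the level-\<open>K\<^sub>1\<close> difference:
  their distance is \<open>0\<close> if the state carries no obligation (\<open>s\<^sub>2 = \<bottom>\<close> or \<open>e = \<epsilon>\<close>, a copy of
  \<open>N\<^sub>1\<close>), \<open>\<lambda>\<^bsup>K\<^sub>1+1\<^esup>\<close> if \<open>k = k'\<close> and \<open>\<lambda>\<^bsup>k'\<^esup>\<close> if \<open>k' < k\<close>.  The inequality holds because pushing a
  distribution of \<open>\<phi>\<^bsup>B,k\<^esup>\<close> forward along the map that truncates levels at \<open>K\<^sub>1\<close> (if \<open>k = k'\<close>)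
  or at \<open>k' - 1\<close> (if \<open>k' < k\<close>) gives a distribution of \<open>\<phi>\<^bsup>B,k'\<^esup>\<close> whose coupled successors are
  at distance at most \<open>\<lambda>\<^bsup>K\<^sub>1\<^esup>\<close> resp. \<open>\<lambda>\<^bsup>k'-1\<^esup>\<close>; one more discount factor restores the bound.
  The initial states \<open>(s\<^sub>0\<^sup>1, s\<^sub>0\<^sup>2, f, K\<^sub>2)\<close> and \<open>(s\<^sub>0\<^sup>1, s\<^sub>0\<^sup>2, f, K\<^sub>1)\<close> are therefore at distance at
  most \<open>\<lambda>\<^bsup>K\<^sub>1\<^esup>\<close>.\<close>

lemma distr_nonneg: "distr S \<mu> \<Longrightarrow> 0 \<le> \<mu> x"
  unfolding distr_def by (cases "x \<in> S") auto

lemma distr_pos_mem: "distr S \<mu> \<Longrightarrow> 0 < \<mu> x \<Longrightarrow> x \<in> S"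
  unfolding distr_def by force

locale pushforward =
  fixes S :: "'x set" and T :: "'y set" and \<mu> :: "'x \<Rightarrow> real" and h :: "'x \<Rightarrow> 'y"
  assumes finite_S: "finite S" and finite_T: "finite T" and distr_\<mu>: "distr S \<mu>"
    and h_mem: "\<And>x. x \<in> S \<Longrightarrow> 0 < \<mu> x \<Longrightarrow> h x \<in> T"
begin

definition kernel :: "'x \<Rightarrow> 'y \<Rightarrow> real" where
  "kernel x y = (if y = h x then 1 else 0)"

definition push :: "'y \<Rightarrow> real" where
  "push y = (\<Sum>x\<in>S. \<mu> x * kernel x y)"

lemma \<mu>_nonneg: "0 \<le> \<mu> x"
  using distr_\<mu> by (rule distr_nonneg)

lemma sum_push_fibre:
  assumes "\<And>x. x \<in> S \<Longrightarrow> 0 < \<mu> x \<Longrightarrow> g (h x) = f x"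
  shows "(\<Sum>y\<in>{y\<in>T. g y = v}. push y) = (\<Sum>x\<in>{x\<in>S. f x = v}. \<mu> x)"
proof -
  have fibre: "(\<Sum>y\<in>{y\<in>T. g y = v}. \<mu> x * kernel x y) = (if f x = v then \<mu> x else 0)"
    if x: "x \<in> S" for x
  proof (cases "0 < \<mu> x")
    case True
    have "(\<Sum>y\<in>{y\<in>T. g y = v}. \<mu> x * kernel x y)
        = (\<Sum>y\<in>{y\<in>T. g y = v}. if y = h x then \<mu> x else 0)"
      by (rule sum.cong) (auto simp: kernel_def)
    also have "\<dots> = (if h x \<in> {y\<in>T. g y = v} then \<mu> x else 0)"
      using sum.delta'[of "{y\<in>T. g y = v}" "h x" "\<lambda>_. \<mu> x"] finite_T by (simp add: eq_commute)
    finally show ?thesis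
      using h_mem[OF x True] assms[OF x True] by simp
  next
    case False
    then show ?thesis using \<mu>_nonneg[of x] by (simp add: kernel_def)
  qed
  have "(\<Sum>y\<in>{y\<in>T. g y = v}. push y) = (\<Sum>x\<in>S. \<Sum>y\<in>{y\<in>T. g y = v}. \<mu> x * kernel x y)"
    unfolding push_def by (rule sum.swap)
  also have "\<dots> = (\<Sum>x\<in>S. if f x = v then \<mu> x else 0)"
    using fibre by (rule sum.cong[OF refl])
  also have "\<dots> = (\<Sum>x\<in>{x\<in>S. f x = v}. \<mu> x)"
    by (simp add: sum.inter_filter[OF finite_S])
  finally show ?thesis .
qed

lemma push_nonneg: "0 \<le> push y"
  unfolding push_def kernel_def by (rule sum_nonneg) (simp add: \<mu>_nonneg)

lemma push_pos_imp:
  assumes "0 < push y"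
  obtains x where "x \<in> S" "0 < \<mu> x" "h x = y"
proof (rule ccontr)
  assume "\<not> thesis"
  then have "\<forall>x\<in>S. \<mu> x * kernel x y = 0"
    using that \<mu>_nonneg unfolding kernel_def by (metis less_eq_real_def mult_not_zero)
  then have "push y = 0"
    unfolding push_def by (intro sum.neutral) auto
  with assms show False by simp
qed

lemma le_push:
  assumes "x \<in> S"
  shows "\<mu> x \<le> push (h x)"
proof -
  have "\<mu> x * kernel x (h x) \<le> push (h x)"
    unfolding push_def by (rule member_le_sum[OF assms]) (auto simp: kernel_def \<mu>_nonneg finite_S)
  then show ?thesis by (simp add: kernel_def)
qed

lemma distr_push: "distr T push"
proof -
  have "push y = 0" if "y \<notin> T" for y
    using push_pos_imp[of y] push_nonneg[of y] h_mem that by force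
  moreover have "sum push T = 1"
    using sum_push_fibre[where g = "\<lambda>_. True" and f = "\<lambda>_. True" and v = True] distr_\<mu>
    by (simp add: distr_def)
  ultimately show ?thesis
    unfolding distr_def using push_nonneg by auto
qed

lemma corr_by_push: "corr_by S T (S \<times> T) \<mu> push kernel"
  unfolding corr_by_def
proof (intro conjI ballI impI)
  fix x assume "x \<in> S" "0 < \<mu> x"
  then show "distr T (kernel x)"
    using h_mem finite_T unfolding distr_def kernel_def by (auto simp: sum.delta')
qed (auto simp: kernel_def push_def)

lemma push_cost_le:
  fixes D :: "'x \<Rightarrow> 'y \<Rightarrow> ennreal"
  assumes "\<And>x. x \<in> S \<Longrightarrow> 0 < \<mu> x \<Longrightarrow> D x (h x) \<le> B"
  shows "(\<Sum>(x, y)\<in>S \<times> T. ennreal (\<mu> x * kernel x y) * D x y) \<le> B"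
proof -
  have row: "(\<Sum>y\<in>T. ennreal (\<mu> x * kernel x y) * D x y) \<le> ennreal (\<mu> x) * B" if x: "x \<in> S" for x
  proof (cases "0 < \<mu> x")
    case True
    have "(\<Sum>y\<in>T. ennreal (\<mu> x * kernel x y) * D x y)
        = (\<Sum>y\<in>T. if y = h x then ennreal (\<mu> x) * D x y else 0)"
      by (rule sum.cong) (auto simp: kernel_def)
    also have "\<dots> = ennreal (\<mu> x) * D x (h x)"
      using h_mem[OF x True] finite_T by (simp add: sum.delta')
    also have "\<dots> \<le> ennreal (\<mu> x) * B"
      using assms[OF x True] by (rule mult_left_mono) simp
    finally show ?thesis .
  next
    case False
    then show ?thesis using \<mu>_nonneg[of x] by simp
  qed
  have "(\<Sum>(x, y)\<in>S \<times> T. ennreal (\<mu> x * kernel x y) * D x y)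
      = (\<Sum>x\<in>S. \<Sum>y\<in>T. ennreal (\<mu> x * kernel x y) * D x y)"
    by (rule sum.cartesian_product[symmetric])
  also have "\<dots> \<le> (\<Sum>x\<in>S. ennreal (\<mu> x) * B)"
    using row by (rule sum_mono)
  also have "\<dots> = ennreal (sum \<mu> S) * B"
    by (simp add: sum_distrib_right[symmetric] sum_ennreal \<mu>_nonneg)
  also have "\<dots> = B"
    using distr_\<mu> by (simp add: distr_def)
  finally show ?thesis .
qed

end

lemma Dcon_le_1: "Dcon M1 M2 \<phi>1 \<phi>2 d \<le> 1"
  unfolding Dcon_def by (rule SUP_least) (rule Inf_lower, simp)

lemma Dcon_leI:
  assumes "\<And>\<mu>1. \<mu>1 \<in> Sat M1 \<phi>1 \<Longrightarrow> \<exists>\<mu>2 \<delta>. \<mu>2 \<in> Sat M2 \<phi>2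
      \<and> corr_by (St M1) (St M2) (St M1 \<times> St M2) \<mu>1 \<mu>2 \<delta>
      \<and> (\<Sum>(x, y)\<in>St M1 \<times> St M2. ennreal (\<mu>1 x * \<delta> x y) * d x y) \<le> B"
  shows "Dcon M1 M2 \<phi>1 \<phi>2 d \<le> B"
  unfolding Dcon_def
proof (rule SUP_least)
  fix \<mu>1 assume "\<mu>1 \<in> Sat M1 \<phi>1"
  then obtain \<mu>2 \<delta> where "\<mu>2 \<in> Sat M2 \<phi>2" "corr_by (St M1) (St M2) (St M1 \<times> St M2) \<mu>1 \<mu>2 \<delta>"
    and cost: "(\<Sum>(x, y)\<in>St M1 \<times> St M2. ennreal (\<mu>1 x * \<delta> x y) * d x y) \<le> B"
    using assms by blast
  then show "Inf (insert 1 {(\<Sum>(x, y)\<in>St M1 \<times> St M2. ennreal (\<mu>1 x * \<delta> x y) * d x y) | \<mu>2 \<delta>.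
      \<mu>2 \<in> Sat M2 \<phi>2 \<and> corr_by (St M1) (St M2) (St M1 \<times> St M2) \<mu>1 \<mu>2 \<delta>}) \<le> B"
    by (intro Inf_lower2[OF _ cost]) blast
qed

lemma dist_op_leI:
  assumes val: "Val M1 s1 = Val M2 s2"
    and may: "\<And>a \<phi>1. Lab M1 s1 a \<phi>1 \<noteq> No \<Longrightarrow>
      \<exists>\<phi>2. Lab M2 s2 a \<phi>2 \<noteq> No \<and> ennreal lam * Dcon M1 M2 \<phi>1 \<phi>2 d \<le> B"
    and must: "\<And>a \<phi>2. Lab M2 s2 a \<phi>2 = Must \<Longrightarrow>
      \<exists>\<phi>1. Lab M1 s1 a \<phi>1 = Must \<and> ennreal lam * Dcon M1 M2 \<phi>1 \<phi>2 d \<le> B"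
  shows "dist_op lam M1 M2 d s1 s2 \<le> B"
proof -
  have "compatible M1 M2 s1 s2"
    unfolding compatible_def using val may must by metis
  moreover have "(SUP (a, \<phi>1)\<in>{(a, \<phi>1). Lab M1 s1 a \<phi>1 \<noteq> No}.
      INF \<phi>2\<in>{\<phi>2. Lab M2 s2 a \<phi>2 \<noteq> No}. ennreal lam * Dcon M1 M2 \<phi>1 \<phi>2 d) \<le> B"
  proof (rule SUP_least, clarify)
    fix a \<phi>1 assume "Lab M1 s1 a \<phi>1 \<noteq> No"
    then obtain \<phi>2 where "Lab M2 s2 a \<phi>2 \<noteq> No" "ennreal lam * Dcon M1 M2 \<phi>1 \<phi>2 d \<le> B"
      using may by blast
    then show "(INF \<phi>2\<in>{\<phi>2. Lab M2 s2 a \<phi>2 \<noteq> No}. ennreal lam * Dcon M1 M2 \<phi>1 \<phi>2 d) \<le> B"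
      by (intro INF_lower2) auto
  qed
  moreover have "(SUP (a, \<phi>2)\<in>{(a, \<phi>2). Lab M2 s2 a \<phi>2 = Must}.
      INF \<phi>1\<in>{\<phi>1. Lab M1 s1 a \<phi>1 = Must}. ennreal lam * Dcon M1 M2 \<phi>1 \<phi>2 d) \<le> B"
  proof (rule SUP_least, clarify)
    fix a \<phi>2 assume "Lab M2 s2 a \<phi>2 = Must"
    then obtain \<phi>1 where "Lab M1 s1 a \<phi>1 = Must" "ennreal lam * Dcon M1 M2 \<phi>1 \<phi>2 d \<le> B"
      using must by blast
    then show "(INF \<phi>1\<in>{\<phi>1. Lab M1 s1 a \<phi>1 = Must}. ennreal lam * Dcon M1 M2 \<phi>1 \<phi>2 d) \<le> B"
      by (intro INF_lower2) auto
  qed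
  ultimately show ?thesis by (simp add: dist_op_def)
qed

lemma dist_op_le_1:
  assumes "0 \<le> lam" "lam \<le> 1"
  shows "dist_op lam M1 M2 d s1 s2 \<le> 1"
proof (cases "compatible M1 M2 s1 s2")
  case True
  have "ennreal lam * Dcon M1 M2 \<phi>1 \<phi>2 d \<le> 1 * 1" for \<phi>1 \<phi>2
    by (rule mult_mono) (use assms Dcon_le_1 in \<open>auto simp: ennreal_le_1\<close>)
  then have bound: "ennreal lam * Dcon M1 M2 \<phi>1 \<phi>2 d \<le> 1" for \<phi>1 \<phi>2
    by simp
  show ?thesis
  proof (rule dist_op_leI)
    show "Val M1 s1 = Val M2 s2"
      using True by (simp add: compatible_def)
  next
    fix a \<phi>1 assume "Lab M1 s1 a \<phi>1 \<noteq> No"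
    then show "\<exists>\<phi>2. Lab M2 s2 a \<phi>2 \<noteq> No \<and> ennreal lam * Dcon M1 M2 \<phi>1 \<phi>2 d \<le> 1"
      using True bound unfolding compatible_def by blast
  next
    fix a \<phi>2 assume "Lab M2 s2 a \<phi>2 = Must"
    then show "\<exists>\<phi>1. Lab M1 s1 a \<phi>1 = Must \<and> ennreal lam * Dcon M1 M2 \<phi>1 \<phi>2 d \<le> 1"
      using True bound unfolding compatible_def by blast
  qed
qed (simp add: dist_op_def)

lemma state_dist_le: "dist_op lam M1 M2 d \<le> d \<Longrightarrow> state_dist lam M1 M2 s1 s2 \<le> d s1 s2"
  unfolding state_dist_def by (drule lfp_lowerbound) (simp add: le_fun_def)

lemma apa_dist_leI:
  assumes "\<And>s. s \<in> Init M1 \<Longrightarrow> \<exists>s'\<in>Init M2. state_dist lam M1 M2 s s' \<le> B"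
  shows "apa_dist lam M1 M2 \<le> B"
  unfolding apa_dist_def
proof (rule SUP_least)
  fix s assume "s \<in> Init M1"
  then obtain s' where "s' \<in> Init M2" "state_dist lam M1 M2 s s' \<le> B"
    using assms by blast
  then show "(INF s'\<in>Init M2. state_dist lam M1 M2 s s') \<le> B"
    by (rule INF_lower2)
qed

lemma diff_lab_DBot_level:
  "(s1, s2o, eo, k) \<in> S \<Longrightarrow> (s1, s2o, eo, k') \<in> S' \<Longrightarrow>
    diff_lab N1 N2 S (s1, s2o, eo, k) a (DBot \<phi>) = diff_lab N1 N2 S' (s1, s2o, eo, k') a (DBot \<phi>)"
  unfolding diff_lab_def Let_def by (auto split: option.splits)

lemma diff_lab_DB_level:
  "(s1, s2o, eo, k) \<in> S \<Longrightarrow> (s1, s2o, eo, k') \<in> S' \<Longrightarrow>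
    diff_lab N1 N2 S (s1, s2o, eo, k) a (DB s2 e \<phi>1 \<phi>2 k)
    = diff_lab N1 N2 S' (s1, s2o, eo, k') a (DB s2 e \<phi>1 \<phi>2 k')"
  unfolding diff_lab_def Let_def by (auto split: option.splits)

lemma diff_lab_DB_not_No:
  "diff_lab N1 N2 S (s1, s2o, eo, k) a (DB s2 e \<phi>1 \<phi>2 j) \<noteq> No \<Longrightarrow>
    s2o = Some s2 \<and> eo = Some e \<and> j = k"
  unfolding diff_lab_def Let_def by (auto split: option.splits if_splits)

lemma Dcon_DBot_le_0:
  fixes D :: "('s1, 's2, 'a) dstate \<Rightarrow> ('s1, 's2, 'a) dstate \<Rightarrow> ennreal"
  assumes finite: "finite S" "finite S'"
    and fst_mem: "\<And>t. t \<in> S \<Longrightarrow> fst t \<in> St N1"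
    and bot_mem: "\<And>s. s \<in> St N1 \<Longrightarrow> (s, None, None, 1) \<in> S'"
    and diag: "\<And>s. (s, None, None, 1) \<in> S \<Longrightarrow> D (s, None, None, 1) (s, None, None, 1) = 0"
  shows "Dcon (diff_gen N1 N2 S I) (diff_gen N1 N2 S' I') (DBot \<phi>) (DBot \<phi>) D \<le> 0"
proof (rule Dcon_leI)
  fix \<mu> assume "\<mu> \<in> Sat (diff_gen N1 N2 S I) (DBot \<phi>)"
  then have \<mu>: "distr S \<mu>" "\<And>t. 0 < \<mu> t \<Longrightarrow> \<exists>s. t = (s, None, None, 1)"
      "(\<lambda>s. \<mu> (s, None, None, 1)) \<in> Sat N1 \<phi>"
    by (auto simp: diff_gen_def diff_sat_def)
  have mem: "t \<in> S \<Longrightarrow> 0 < \<mu> t \<Longrightarrow> id t \<in> S'" for t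
    using \<mu>(2)[of t] fst_mem[of t] bot_mem by auto
  interpret pushforward S S' \<mu> id
    using finite \<mu>(1) mem by unfold_locales auto
  have "push = \<mu>"
  proof
    fix t
    have "push t = (\<Sum>t'\<in>S. if t' = t then \<mu> t' else 0)"
      unfolding push_def kernel_def by (rule sum.cong) auto
    also have "\<dots> = (if t \<in> S then \<mu> t else 0)"
      using finite by (simp add: sum.delta)
    also have "\<dots> = \<mu> t"
      using distr_pos_mem[OF \<mu>(1), of t] \<mu>_nonneg[of t] by fastforce
    finally show "push t = \<mu> t" .
  qed
  then have "\<mu> \<in> Sat (diff_gen N1 N2 S' I') (DBot \<phi>)"
    using distr_push \<mu>(2,3) by (auto simp: diff_gen_def diff_sat_def)
  moreover have "corr_by S S' (S \<times> S') \<mu> \<mu> kernel"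
    using corr_by_push \<open>push = \<mu>\<close> by simp
  moreover have "(\<Sum>(t, t')\<in>S \<times> S'. ennreal (\<mu> t * kernel t t') * D t t') \<le> 0"
    using \<mu>(2) mem diag by (intro push_cost_le) fastforce
  ultimately show "\<exists>\<mu>' \<delta>. \<mu>' \<in> Sat (diff_gen N1 N2 S' I') (DBot \<phi>)
      \<and> corr_by (St (diff_gen N1 N2 S I)) (St (diff_gen N1 N2 S' I'))
          (St (diff_gen N1 N2 S I) \<times> St (diff_gen N1 N2 S' I')) \<mu> \<mu>' \<delta>
      \<and> (\<Sum>(x, y)\<in>St (diff_gen N1 N2 S I) \<times> St (diff_gen N1 N2 S' I'). ennreal (\<mu> x * \<delta> x y) * D x y) \<le> 0"
    by (auto simp: diff_gen_def)
qed

text \<open>A state keeping no obligation of \<open>N\<^sub>2\<close> must stay at level \<open>1\<close>, by condition (1)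
  on \<open>\<phi>\<^bsup>B,k\<^esup>\<close>.\<close>
definition lower_level :: "(nat \<Rightarrow> nat) \<Rightarrow> ('s1, 's2, 'a) dstate \<Rightarrow> ('s1, 's2, 'a) dstate" where
  "lower_level g = (\<lambda>(s, s2o, c, k). (s, s2o, c, if s2o = None then 1 else g k))"

lemma lower_level_simp [simp]:
  "lower_level g (s, s2o, c, k) = (s, s2o, c, if s2o = None then 1 else g k)"
  by (simp add: lower_level_def)

text \<open>Transport along \<open>lower_level g\<close> keeps both marginals, so conditions (2) and (3b) on
  \<open>\<phi>\<^bsup>B,k\<^esup>\<close> carry over; \<open>below\<close> is what keeps condition (3c).\<close>
lemma Dcon_DB_le:
  fixes D :: "('s1, 's2, 'a) dstate \<Rightarrow> ('s1, 's2, 'a) dstate \<Rightarrow> ennreal"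
  assumes finite: "finite S" "finite S'"
    and lower_mem: "\<And>t. t \<in> S \<Longrightarrow> lower_level g t \<in> S'"
    and level_pos: "\<And>s s2o c k. (s, s2o, c, k) \<in> S \<Longrightarrow> 1 \<le> k"
    and below: "\<And>k. 1 \<le> k \<Longrightarrow> k < a \<Longrightarrow> b \<noteq> 1 \<and> g k < b"
    and cost: "\<And>t. t \<in> S \<Longrightarrow> D t (lower_level g t) \<le> B"
  shows "Dcon (diff_gen N1 N2 S I) (diff_gen N1 N2 S' I') (DB s2 e \<phi>1 \<phi>2 a) (DB s2 e \<phi>1 \<phi>2 b) D \<le> B"
proof (rule Dcon_leI)
  fix \<mu> assume "\<mu> \<in> Sat (diff_gen N1 N2 S I) (DB s2 e \<phi>1 \<phi>2 a)"
  then have \<mu>: "distr S \<mu>"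
    "\<And>s1' s2' c k'. 0 < \<mu> (s1', s2', c, k') \<Longrightarrow>
       c \<in> insert None (Some ` Bset N1 N2 s1' s2') \<and>
       ((succ2 N1 N2 s2 e s1' = {} \<and> s2' = None \<and> k' = 1) \<or> s2' \<in> Some ` succ2 N1 N2 s2 e s1')"
    "(\<lambda>s1'. \<Sum>t\<in>{t\<in>S. fst t = s1'}. \<mu> t) \<in> Sat N1 \<phi>1"
    "(\<exists>s1' c. 0 < \<mu> (s1', None, c, 1))
       \<or> (\<lambda>s2'. \<Sum>t\<in>{t\<in>S. fst (snd t) = Some s2'}. \<mu> t) \<notin> Sat N2 \<phi>2
       \<or> (a \<noteq> 1 \<and> (\<exists>s1' s2' c k'. 0 < \<mu> (s1', Some s2', Some c, k') \<and> k' < a))"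
    by (auto simp: diff_gen_def diff_sat_def)
  interpret pushforward S S' \<mu> "lower_level g"
    using finite \<mu>(1) lower_mem by unfold_locales auto
  have level_pos': "1 \<le> k" if "0 < \<mu> (s, s2o, c, k)" for s s2o c k
    using level_pos distr_pos_mem[OF \<mu>(1) that] by blast
  have marg1: "(\<lambda>s1'. \<Sum>t\<in>{t\<in>S'. fst t = s1'}. push t) = (\<lambda>s1'. \<Sum>t\<in>{t\<in>S. fst t = s1'}. \<mu> t)"
    by (rule ext, rule sum_push_fibre) (simp add: lower_level_def split_beta)
  have marg2: "(\<lambda>s2'. \<Sum>t\<in>{t\<in>S'. fst (snd t) = Some s2'}. push t)
      = (\<lambda>s2'. \<Sum>t\<in>{t\<in>S. fst (snd t) = Some s2'}. \<mu> t)"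
    by (rule ext, rule sum_push_fibre) (simp add: lower_level_def split_beta)
  have support: "c \<in> insert None (Some ` Bset N1 N2 s1' s2') \<and>
      ((succ2 N1 N2 s2 e s1' = {} \<and> s2' = None \<and> k' = 1) \<or> s2' \<in> Some ` succ2 N1 N2 s2 e s1')"
    if pos: "0 < push (s1', s2', c, k')" for s1' s2' c k'
  proof -
    obtain t where t: "t \<in> S" "0 < \<mu> t" "lower_level g t = (s1', s2', c, k')"
      using push_pos_imp[OF pos] by blast
    then obtain k where "t = (s1', s2', c, k)"
      by (cases t) (auto split: if_splits)
    then show ?thesis
      using \<mu>(2)[of s1' s2' c k] t by (auto split: if_splits)
  qed
  have violation: "(\<exists>s1' c. 0 < push (s1', None, c, 1))
      \<or> (\<lambda>s2'. \<Sum>t\<in>{t\<in>S'. fst (snd t) = Some s2'}. push t) \<notin> Sat N2 \<phi>2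
      \<or> (b \<noteq> 1 \<and> (\<exists>s1' s2' c k'. 0 < push (s1', Some s2', Some c, k') \<and> k' < b))"
    using \<mu>(4)
  proof (elim disjE exE conjE)
    fix s1' c assume "0 < \<mu> (s1', None, c, 1)"
    then have "0 < push (s1', None, c, 1)"
      using le_push[of "(s1', None, c, 1)"] distr_pos_mem[OF \<mu>(1)] by fastforce
    then show ?thesis by blast
  next
    assume "(\<lambda>s2'. \<Sum>t\<in>{t\<in>S. fst (snd t) = Some s2'}. \<mu> t) \<notin> Sat N2 \<phi>2"
    then show ?thesis using marg2 by simp
  next
    fix s1' s2' c k' assume pos: "0 < \<mu> (s1', Some s2', Some c, k')" and "k' < a"
    then have "b \<noteq> 1 \<and> g k' < b"
      using below level_pos'[OF pos] by blast
    moreover have "0 < push (s1', Some s2', Some c, g k')"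
      using le_push[of "(s1', Some s2', Some c, k')"] distr_pos_mem[OF \<mu>(1) pos] pos by fastforce
    ultimately show ?thesis by blast
  qed
  have "push \<in> Sat (diff_gen N1 N2 S' I') (DB s2 e \<phi>1 \<phi>2 b)"
    using distr_push support marg1 \<mu>(3) violation by (simp add: diff_gen_def diff_sat_def)
  moreover have "(\<Sum>(t, t')\<in>S \<times> S'. ennreal (\<mu> t * kernel t t') * D t t') \<le> B"
    using cost by (intro push_cost_le)
  ultimately show "\<exists>\<mu>' \<delta>. \<mu>' \<in> Sat (diff_gen N1 N2 S' I') (DB s2 e \<phi>1 \<phi>2 b)
      \<and> corr_by (St (diff_gen N1 N2 S I)) (St (diff_gen N1 N2 S' I'))
          (St (diff_gen N1 N2 S I) \<times> St (diff_gen N1 N2 S' I')) \<mu> \<mu>' \<delta>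
      \<and> (\<Sum>(x, y)\<in>St (diff_gen N1 N2 S I) \<times> St (diff_gen N1 N2 S' I'). ennreal (\<mu> x * \<delta> x y) * D x y) \<le> B"
    using corr_by_push by (auto simp: diff_gen_def)
qed

definition level_dist :: "real \<Rightarrow> nat \<Rightarrow> ('s1, 's2, 'a) dstate set \<Rightarrow> ('s1, 's2, 'a) dstate set
    \<Rightarrow> ('s1, 's2, 'a) dstate \<Rightarrow> ('s1, 's2, 'a) dstate \<Rightarrow> ennreal" where
  "level_dist lam K S S' t t' = (case (t, t') of ((s, s2o, c, k), (s', s2o', c', k')) \<Rightarrow>
     if t \<in> S \<and> t' \<in> S' \<and> s = s' \<and> s2o = s2o' \<and> c = c' \<and> k' \<le> k
     then (if s2o = None \<or> c = None then 0
           else if k = k' then ennreal (lam ^ Suc K) else ennreal (lam ^ k'))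
     else 1)"

lemma level_dist_simp:
  "level_dist lam K S S' (s, s2o, c, k) (s', s2o', c', k') =
    (if (s, s2o, c, k) \<in> S \<and> (s', s2o', c', k') \<in> S' \<and> s = s' \<and> s2o = s2o' \<and> c = c' \<and> k' \<le> k
     then (if s2o = None \<or> c = None then 0
           else if k = k' then ennreal (lam ^ Suc K) else ennreal (lam ^ k'))
     else 1)"
  by (simp add: level_dist_def)

lemma ennreal_power_antimono: "0 \<le> lam \<Longrightarrow> lam \<le> 1 \<Longrightarrow> m \<le> n \<Longrightarrow> ennreal (lam ^ n) \<le> ennreal (lam ^ m)"
  by (simp add: power_decreasing)

lemma ennreal_mult_power: "0 \<le> lam \<Longrightarrow> ennreal lam * ennreal (lam ^ n) = ennreal (lam ^ Suc n)"
  by (simp add: ennreal_mult[symmetric])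

context
  fixes N1 :: "('s1, 'a, 'p, 'c1) apa" and N2 :: "('s2, 'a, 'p, 'c2) apa"
    and P :: "'s2 option set" and Q :: "'a option set"
    and K1 K2 :: nat and lam :: real and I1 I2 :: "('s1, 's2, 'a) dstate set"
  assumes finite: "finite (St N1)" "finite P" "finite Q"
    and None_mem: "None \<in> P" "None \<in> Q"
    and K: "1 \<le> K1" "K1 \<le> K2" and lam: "0 \<le> lam" "lam \<le> 1"
begin

abbreviation "S_K2 \<equiv> St N1 \<times> P \<times> Q \<times> {1..K2}"
abbreviation "S_K1 \<equiv> St N1 \<times> P \<times> Q \<times> {1..K1}"
abbreviation "M_K2 \<equiv> diff_gen N1 N2 S_K2 I1"
abbreviation "M_K1 \<equiv> diff_gen N1 N2 S_K1 I2"
abbreviation "d_lev \<equiv> level_dist lam K1 S_K2 S_K1"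

lemma finite_S_K: "finite S_K2" "finite S_K1"
  using finite by auto

lemma lower_level_mem:
  "t \<in> S_K2 \<Longrightarrow> (\<And>k. 1 \<le> k \<Longrightarrow> k \<le> K2 \<Longrightarrow> 1 \<le> g k \<and> g k \<le> K1) \<Longrightarrow> lower_level g t \<in> S_K1"
  using K by (cases t) auto

lemma lam_Dcon_DBot_le: "ennreal lam * Dcon M_K2 M_K1 (DBot \<phi>) (DBot \<phi>) d_lev \<le> B"
proof -
  have "Dcon M_K2 M_K1 (DBot \<phi>) (DBot \<phi>) d_lev \<le> 0"
    by (rule Dcon_DBot_le_0[OF finite_S_K]) (use K None_mem in \<open>auto simp: level_dist_simp\<close>)
  then show ?thesis by simp
qed

lemma lam_Dcon_le: "ennreal lam * Dcon M_K2 M_K1 \<phi>1 \<phi>2 d_lev \<le> ennreal lam"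
  using mult_left_mono[OF Dcon_le_1, of "ennreal lam"] by simp

lemma lam_Dcon_DB_le_same_level:
  assumes "k \<le> K1"
  shows "ennreal lam * Dcon M_K2 M_K1 (DB s2 e \<phi>1 \<phi>2 k) (DB s2 e \<phi>1 \<phi>2 k) d_lev \<le> ennreal (lam ^ Suc K1)"
proof -
  let ?g = "\<lambda>k. min k K1"
  have "Dcon M_K2 M_K1 (DB s2 e \<phi>1 \<phi>2 k) (DB s2 e \<phi>1 \<phi>2 k) d_lev \<le> ennreal (lam ^ K1)"
  proof (rule Dcon_DB_le[OF finite_S_K, where g = ?g])
    fix t assume t: "t \<in> S_K2"
    then have "lower_level ?g t \<in> S_K1"
      using K by (intro lower_level_mem) auto
    then show "d_lev t (lower_level ?g t) \<le> ennreal (lam ^ K1)"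
      using t lam ennreal_power_antimono[of lam K1 "Suc K1"] by (cases t) (auto simp: level_dist_simp)
  qed (use assms K in auto)
  then have "ennreal lam * Dcon M_K2 M_K1 (DB s2 e \<phi>1 \<phi>2 k) (DB s2 e \<phi>1 \<phi>2 k) d_lev
      \<le> ennreal lam * ennreal (lam ^ K1)"
    by (rule mult_left_mono) simp
  then show ?thesis using ennreal_mult_power[OF lam(1)] by simp
qed

lemma lam_Dcon_DB_le_lower_level:
  assumes "2 \<le> k'" "k' \<le> K1" "k' < k"
  shows "ennreal lam * Dcon M_K2 M_K1 (DB s2 e \<phi>1 \<phi>2 k) (DB s2 e \<phi>1 \<phi>2 k') d_lev \<le> ennreal (lam ^ k')"
proof -
  let ?g = "\<lambda>j. min j (k' - 1)"
  have "Dcon M_K2 M_K1 (DB s2 e \<phi>1 \<phi>2 k) (DB s2 e \<phi>1 \<phi>2 k') d_lev \<le> ennreal (lam ^ (k' - 1))"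
  proof (rule Dcon_DB_le[OF finite_S_K, where g = ?g])
    fix t assume t: "t \<in> S_K2"
    then have "lower_level ?g t \<in> S_K1"
      using K assms by (intro lower_level_mem) auto
    moreover have "ennreal (lam ^ Suc K1) \<le> ennreal (lam ^ (k' - 1))"
      using lam assms by (intro ennreal_power_antimono) auto
    ultimately show "d_lev t (lower_level ?g t) \<le> ennreal (lam ^ (k' - 1))"
      using t lam by (cases t) (auto simp: level_dist_simp min_def)
  qed (use assms K in auto)
  then have "ennreal lam * Dcon M_K2 M_K1 (DB s2 e \<phi>1 \<phi>2 k) (DB s2 e \<phi>1 \<phi>2 k') d_lev
      \<le> ennreal lam * ennreal (lam ^ (k' - 1))"
    by (rule mult_left_mono) simp
  then show ?thesis using ennreal_mult_power[OF lam(1), of "k' - 1"] assms by simp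
qed

lemma lam_Dcon_DB_le_level_dist:
  assumes "(s, Some s2, Some e, k) \<in> S_K2" "(s, Some s2, Some e, k') \<in> S_K1" "k' \<le> k"
  shows "ennreal lam * Dcon M_K2 M_K1 (DB x y \<phi>1 \<phi>2 k) (DB x y \<phi>1 \<phi>2 k') d_lev
    \<le> d_lev (s, Some s2, Some e, k) (s, Some s2, Some e, k')"
proof -
  have k': "1 \<le> k'" "k' \<le> K1" using assms(2) by auto
  consider "k = k'" | "k' = 1" "k' < k" | "2 \<le> k'" "k' < k"
    using assms(3) k' by linarith
  then show ?thesis
  proof cases
    case 1
    then show ?thesis using lam_Dcon_DB_le_same_level k' assms by (simp add: level_dist_simp)
  next
    case 2
    then show ?thesis using lam_Dcon_le assms by (simp add: level_dist_simp)
  next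
    case 3
    then show ?thesis using lam_Dcon_DB_le_lower_level k' assms by (simp add: level_dist_simp)
  qed
qed


lemma dist_op_level_dist_le: "dist_op lam M_K2 M_K1 d_lev \<le> d_lev"
proof (intro le_funI)
  fix t t'
  show "dist_op lam M_K2 M_K1 d_lev t t' \<le> d_lev t t'"
  proof (cases "d_lev t t' = 1")
    case True
    then show ?thesis using dist_op_le_1[OF lam] by simp
  next
    case False
    obtain s s2o eo k where t: "t = (s, s2o, eo, k)" by (cases t)
    obtain s' s2o' eo' k' where t': "t' = (s', s2o', eo', k')" by (cases t')
    from False have eq: "s' = s" "s2o' = s2o" "eo' = eo" and "k' \<le> k"
      and mem: "(s, s2o, eo, k) \<in> S_K2" "(s, s2o, eo, k') \<in> S_K1"
      unfolding t t' level_dist_simp by (auto split: if_splits)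
    show ?thesis unfolding t t' eq
    proof (rule dist_op_leI)
      show "Val M_K2 (s, s2o, eo, k) = Val M_K1 (s, s2o, eo, k')"
        by (simp add: diff_gen_def)
    next
      fix a \<phi>1 assume lab: "Lab M_K2 (s, s2o, eo, k) a \<phi>1 \<noteq> No"
      show "\<exists>\<phi>2. Lab M_K1 (s, s2o, eo, k') a \<phi>2 \<noteq> No \<and>
          ennreal lam * Dcon M_K2 M_K1 \<phi>1 \<phi>2 d_lev \<le> d_lev (s, s2o, eo, k) (s, s2o, eo, k')"
      proof (cases \<phi>1)
        case (DBot \<phi>)
        then show ?thesis
          using lab diff_lab_DBot_level[OF mem, of N1 N2 a \<phi>] lam_Dcon_DBot_le by (auto simp: diff_gen_def)
      next
        case (DB x y p q j)
        then have "s2o = Some x" "eo = Some y" "j = k"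
          using lab by (auto simp: diff_gen_def dest: diff_lab_DB_not_No)
        then show ?thesis
          using lab diff_lab_DB_level[OF mem, of N1 N2 a x y p q] lam_Dcon_DB_le_level_dist mem DB \<open>k' \<le> k\<close>
          by (auto simp: diff_gen_def intro!: exI[of _ "DB x y p q k'"])
      qed
    next
      fix a \<phi>2 assume lab: "Lab M_K1 (s, s2o, eo, k') a \<phi>2 = Must"
      show "\<exists>\<phi>1. Lab M_K2 (s, s2o, eo, k) a \<phi>1 = Must \<and>
          ennreal lam * Dcon M_K2 M_K1 \<phi>1 \<phi>2 d_lev \<le> d_lev (s, s2o, eo, k) (s, s2o, eo, k')"
      proof (cases \<phi>2)
        case (DBot \<phi>)
        then show ?thesis
          using lab diff_lab_DBot_level[OF mem, of N1 N2 a \<phi>] lam_Dcon_DBot_le by (auto simp: diff_gen_def)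
      next
        case (DB x y p q j)
        then have "s2o = Some x" "eo = Some y" "j = k'"
          using lab diff_lab_DB_not_No[of N1 N2 S_K1 s s2o eo k' a x y p q j] by (simp_all add: diff_gen_def)
        then show ?thesis
          using lab diff_lab_DB_level[OF mem, of N1 N2 a x y p q] lam_Dcon_DB_le_level_dist mem DB \<open>k' \<le> k\<close>
          by (auto simp: diff_gen_def intro!: exI[of _ "DB x y p q k"])
      qed
    qed
  qed
qed

lemma state_dist_le_level_dist: "state_dist lam M_K2 M_K1 t t' \<le> d_lev t t'"
  using dist_op_level_dist_le by (rule state_dist_le)
end

lemma Bset_subset_Act:
  assumes "wf_apa N1" "wf_apa N2" "Act N1 = Act N2"
  shows "Bset N1 N2 s1 (Some s2) \<subseteq> Act N1"
proof
  fix e assume "e \<in> Bset N1 N2 s1 (Some s2)"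
  then have "(\<exists>\<phi>. Lab N1 s1 e \<phi> \<noteq> No) \<or> (\<exists>\<phi>. Lab N2 s2 e \<phi> \<noteq> No)"
    unfolding Bset_def Ba_def Bb_def Bc_def Bd_def Be_def Bf_def
    by (simp only: option.case Un_iff mem_Collect_eq) (metis mtv.distinct)
  then show "e \<in> Act N1"
    using assms unfolding wf_apa_def by metis
qed

lemma apa_dist_apa_diff_Val_neq:
  fixes N1 :: "('s1, 'a, 'p, 'c1) apa" and N2 :: "('s2, 'a, 'p, 'c2) apa"
  assumes "finite (St N1)" "s01 \<in> St N1" "Init N1 = {s01}" "Init N2 = {s02}"
    and "Val N1 s01 \<noteq> Val N2 s02" and "0 \<le> lam" "lam \<le> 1"
  shows "apa_dist lam (apa_diff N1 N2 K) (apa_diff N1 N2 K') \<le> 0"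
proof -
  let ?t = "(s01, None, None, 1) :: ('s1, 's2, 'a) dstate"
  let ?S = "St N1 \<times> {None} \<times> {None} \<times> {1..1}"
  let ?M = "diff_gen N1 N2 ?S {?t}"
  have diff: "apa_diff N1 N2 k = ?M" for k
    using assms(3-5) by (simp add: apa_diff_def)
  have "state_dist lam ?M ?M ?t ?t \<le> level_dist lam 1 ?S ?S ?t ?t"
    by (rule state_dist_le_level_dist) (use assms in auto)
  also have "\<dots> = 0"
    using assms(2) by (simp add: level_dist_simp)
  finally show ?thesis
    unfolding diff by (intro apa_dist_leI) (auto simp: diff_gen_def)
qed

lemma apa_dist_apa_diff_Val_eq:
  assumes "wf_apa N1" "wf_apa N2" "Act N1 = Act N2" "Init N1 = {s01}" "Init N2 = {s02}"
    and "Val N1 s01 = Val N2 s02" and "1 \<le> K1" "K1 \<le> K2" and "0 \<le> lam" "lam \<le> 1"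
  shows "apa_dist lam (apa_diff N1 N2 K2) (apa_diff N1 N2 K1) \<le> ennreal (lam ^ K1)"
proof (rule apa_dist_leI)
  have finite: "finite (St N1)" "finite (St N2)" "finite (Act N1)"
    and init: "s01 \<in> St N1" "s02 \<in> St N2"
    using assms(1,2,4,5) unfolding wf_apa_def by auto
  let ?P = "insert None (Some ` St N2)" and ?Q = "insert None (Some ` Act N1)"
  have diff: "apa_diff N1 N2 K = diff_gen N1 N2 (St N1 \<times> ?P \<times> ?Q \<times> {1..K})
      {(s01, Some s02, Some f, K) | f. f \<in> Bset N1 N2 s01 (Some s02)}" for K
    using assms(4-6) by (simp add: apa_diff_def diff_states_def)
  fix t assume "t \<in> Init (apa_diff N1 N2 K2)"
  then obtain f where f: "f \<in> Bset N1 N2 s01 (Some s02)" "t = (s01, Some s02, Some f, K2)"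
    unfolding diff by (auto simp: diff_gen_def)
  let ?t' = "(s01, Some s02, Some f, K1)"
  have "state_dist lam (apa_diff N1 N2 K2) (apa_diff N1 N2 K1) t ?t'
      \<le> level_dist lam K1 (St N1 \<times> ?P \<times> ?Q \<times> {1..K2}) (St N1 \<times> ?P \<times> ?Q \<times> {1..K1}) t ?t'"
    unfolding diff by (rule state_dist_le_level_dist) (use finite assms(7-10) in auto)
  also have "\<dots> \<le> ennreal (lam ^ K1)"
    using f Bset_subset_Act[OF assms(1-3)] init assms(7-10) ennreal_power_antimono[of lam K1 "Suc K1"]
    by (auto simp: level_dist_simp)
  finally show "\<exists>t'\<in>Init (apa_diff N1 N2 K1).
      state_dist lam (apa_diff N1 N2 K2) (apa_diff N1 N2 K1) t t' \<le> ennreal (lam ^ K1)"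
    using f(1) by (auto simp: diff diff_gen_def)
qed

theorem lemma4p6:
  fixes N1 :: "('s1, 'a, 'p, 'c1) apa" and N2 :: "('s2, 'a, 'p, 'c2) apa"
    and s01 :: 's1 and s02 :: 's2 and lam :: real and K1 K2 :: nat
  assumes "wf_apa N1" and "wf_apa N2"
    and "Act N1 = Act N2" and "APs N1 = APs N2"
    and "Init N1 = {s01}" and "Init N2 = {s02}"
    and "deterministic N1" and "deterministic N2"
    and "svnf N1" and "svnf N2"
    and "\<not> refines N1 N2"
    and "0 < lam" and "lam < 1"
    and "1 \<le> K1" and "K1 \<le> K2"
  shows "apa_dist lam (apa_diff N1 N2 K2) (apa_diff N1 N2 K1) \<le> ennreal (lam ^ K1)"
proof (cases "Val N1 s01 = Val N2 s02")
  case True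
  then show ?thesis
    using assms by (intro apa_dist_apa_diff_Val_eq) auto
next
  case False
  have "finite (St N1)" "s01 \<in> St N1"
    using assms(1,5) unfolding wf_apa_def by auto
  then have "apa_dist lam (apa_diff N1 N2 K2) (apa_diff N1 N2 K1) \<le> 0"
    using False assms by (intro apa_dist_apa_diff_Val_neq) auto
  then show ?thesis
    using order_trans zero_le by blast
qed

end
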